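(* Let $E$ be a real Banach space. Then every non-degenerate order interval $[f,g]=\{h\in FBL[E]: f\le h\le g\}$ of $FBL[E]$ (where $f,g\in FBL[E]$, $f\le g$, $f\ne g$) has density character equal to the density character of $E$.
   Context: The density character of a topological space is the least cardinality of a dense subset. For a real Banach space $E$ with dual $E^*$ and closed unit ball $B_E$, let $H[E]$ be the vector space of all positively homogeneous functions $f:E^*\to\mathbb R$ (i.e. $f(\lambda x^* )=\lambda f(x^* )$ for all $\lambda>0$). For $f\in H[E]$ put $\|f\|_{FBL[E]}:=\sup\{\sum_{k=1}^n|f(x_k^* )| : n\in\mathbb N,\ x_1^*,\dots,x_n^*\in E^*,\ \sup_{x\in B_E}\sum_{k=1}^n|x_k^*(x)|\le 1\}$. $H_0[E]:=\{f\in H[E]:\|f\|_{FBL[E]}<\infty\}$ is a Banach lattice with this norm and pointwise order/operations. For $x\in E$ let $\delta_x(x^* )=x^*(x)$. $FBL[E]$ is the closed sublattice of $H_0[E]$ generated by $\{\delta_x:x\in E\}$. *)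

theory Defs
  imports "HOL-Analysis.Analysis"
begin

definition dense_wrt :: "('b \<Rightarrow> 'b \<Rightarrow> real) \<Rightarrow> 'b set \<Rightarrow> 'b set \<Rightarrow> bool" where
  "dense_wrt d S D \<longleftrightarrow> D \<subseteq> S \<and> (\<forall>x\<in>S. \<forall>e>0. \<exists>y\<in>D. d x y < e)"

text \<open>D is a dense subset of S of least cardinality (so card_of D is the density character).\<close>
definition density_witness :: "('b \<Rightarrow> 'b \<Rightarrow> real) \<Rightarrow> 'b set \<Rightarrow> 'b set \<Rightarrow> bool" where
  "density_witness d S D \<longleftrightarrow> dense_wrt d S D \<and>
     (\<forall>D'. dense_wrt d S D' \<longrightarrow> (card_of D, card_of D') \<in> ordLeq)"

definition same_density ::
  "('b \<Rightarrow> 'b \<Rightarrow> real) \<Rightarrow> 'b set \<Rightarrow> ('c \<Rightarrow> 'c \<Rightarrow> real) \<Rightarrow> 'c set \<Rightarrow> bool" where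
  "same_density d1 S d2 T \<longleftrightarrow>
     (\<exists>D1 D2. density_witness d1 S D1 \<and> density_witness d2 T D2 \<and> (card_of D1, card_of D2) \<in> ordIso)"

text \<open>Free Banach lattice FBL[E]: functions on the dual E* (bounded linear functionals).\<close>

definition pos_homogeneous :: "(('a::real_normed_vector \<Rightarrow>\<^sub>L real) \<Rightarrow> real) \<Rightarrow> bool" where
  "pos_homogeneous f \<longleftrightarrow> (\<forall>t::real. \<forall>x. t > 0 \<longrightarrow> f (t *\<^sub>R x) = t * f x)"

definition fbl_sums :: "(('a::real_normed_vector \<Rightarrow>\<^sub>L real) \<Rightarrow> real) \<Rightarrow> real set" where
  "fbl_sums f = {(\<Sum>k<n. \<bar>f (xs k)\<bar>) | (n::nat) (xs::nat \<Rightarrow> ('a \<Rightarrow>\<^sub>L real)).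
      \<forall>x::'a. norm x \<le> 1 \<longrightarrow> (\<Sum>k<n. \<bar>blinfun_apply (xs k) x\<bar>) \<le> 1}"

definition fbl_norm :: "(('a::real_normed_vector \<Rightarrow>\<^sub>L real) \<Rightarrow> real) \<Rightarrow> real" where
  "fbl_norm f = Sup (fbl_sums f)"

definition H0 :: "(('a::real_normed_vector \<Rightarrow>\<^sub>L real) \<Rightarrow> real) set" where
  "H0 = {f. pos_homogeneous f \<and> bdd_above (fbl_sums f)}"

definition fbl_dist ::
  "(('a::real_normed_vector \<Rightarrow>\<^sub>L real) \<Rightarrow> real) \<Rightarrow> (('a \<Rightarrow>\<^sub>L real) \<Rightarrow> real) \<Rightarrow> real" where
  "fbl_dist f g = fbl_norm (\<lambda>x. f x - g x)"

definition delta :: "'a::real_normed_vector \<Rightarrow> ('a \<Rightarrow>\<^sub>L real) \<Rightarrow> real" where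
  "delta x = (\<lambda>xs. blinfun_apply xs x)"

definition closed_sublattice_gen :: "(('a::real_normed_vector \<Rightarrow>\<^sub>L real) \<Rightarrow> real) set \<Rightarrow> bool" where
  "closed_sublattice_gen S \<longleftrightarrow> S \<subseteq> H0 \<and> (\<forall>x. delta x \<in> S) \<and>
     (\<forall>f\<in>S. \<forall>g\<in>S. (\<lambda>y. f y + g y) \<in> S) \<and>
     (\<forall>f\<in>S. \<forall>c::real. (\<lambda>y. c * f y) \<in> S) \<and>
     (\<forall>f\<in>S. \<forall>g\<in>S. (\<lambda>y. max (f y) (g y)) \<in> S \<and> (\<lambda>y. min (f y) (g y)) \<in> S) \<and>
     (\<forall>s h. (\<forall>n. s n \<in> S) \<and> h \<in> H0 \<and> (\<lambda>n. fbl_dist (s n) h) \<longlonglongrightarrow> 0 \<longrightarrow> h \<in> S)"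

definition FBL :: "(('a::real_normed_vector \<Rightarrow>\<^sub>L real) \<Rightarrow> real) set" where
  "FBL = \<Inter> {S. closed_sublattice_gen S}"

definition order_interval ::
  "(('a::real_normed_vector \<Rightarrow>\<^sub>L real) \<Rightarrow> real) \<Rightarrow> (('a \<Rightarrow>\<^sub>L real) \<Rightarrow> real) \<Rightarrow> (('a \<Rightarrow>\<^sub>L real) \<Rightarrow> real) set" where
  "order_interval f g = {h \<in> FBL. f \<le> h \<and> h \<le> g}"

end

theory Submission
  imports Defs
begin

unbundle cardinal_syntax

text \<open>Upper bound: if \<open>D\<close> is dense in \<open>E\<close>, every element of \<open>FBL[E]\<close> is a limit of
  lattice expressions with rational coefficients in the \<open>\<delta>\<^sub>x\<close>, \<open>x \<in> D\<close>; there are only \<open>|D|\<close>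
  of these, and a subset of a metric space never has larger density character than a set that
  approximates it.

  Lower bound: pick \<open>x\<^sub>0\<^sup>*\<close> with \<open>(g - f)(x\<^sub>0\<^sup>*) > 0\<close> and \<open>z\<close> with \<open>x\<^sub>0\<^sup>*(z) > \<parallel>x\<^sub>0\<^sup>*\<parallel>/2\<close>, and put
  \<open>\<phi>(x) = f + (\<delta>\<^bsub>\<lambda>z+x\<^esub>\<^sup>+ \<and> (g - f))\<close>. For small \<open>x\<close> and functionals near \<open>x\<^sub>0\<^sup>*\<close> the truncation is
  inactive, so \<open>\<phi>(x) - \<phi>(y)\<close> agrees with \<open>\<delta>\<^bsub>x-y\<^esub>\<close> there; testing it at \<open>x\<^sub>0\<^sup>* \<plusminus> sL\<close> for a
  functional \<open>L\<close> norming \<open>x - y\<close> shows that \<open>\<phi>\<close> is bi-Lipschitz from a ball of \<open>E\<close> into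
  \<open>[f, g]\<close>. Dilates of a dense subset of that ball are dense in \<open>E\<close>.\<close>

section \<open>Density characters\<close>

lemma density_witness_exists:
  assumes "\<And>x. x \<in> S \<Longrightarrow> d x x = 0"
  shows "\<exists>D. density_witness d S D"
proof -
  have "dense_wrt d S S" unfolding dense_wrt_def using assms by force
  then obtain r where r: "r \<in> {|D| | D. dense_wrt d S D}" "\<forall>r'\<in>{|D| | D. dense_wrt d S D}. r \<le>o r'"
    using exists_minim_Card_order[of "{|D| | D. dense_wrt d S D}"] card_of_Card_order by blast
  then show ?thesis unfolding density_witness_def by blast
qed

lemma density_witness_dense: "density_witness d S D \<Longrightarrow> dense_wrt d S D"
  unfolding density_witness_def by blast

lemma density_witness_le: "density_witness d S D \<Longrightarrow> dense_wrt d S D' \<Longrightarrow> |D| \<le>o |D'|"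
  unfolding density_witness_def by blast

lemma same_densityI:
  assumes "\<And>x. x \<in> S \<Longrightarrow> d1 x x = 0" and "\<And>y. y \<in> T \<Longrightarrow> d2 y y = 0"
    and "\<And>D2. density_witness d2 T D2 \<Longrightarrow> \<exists>D1. dense_wrt d1 S D1 \<and> |D1| \<le>o |D2|"
    and "\<And>D1. density_witness d1 S D1 \<Longrightarrow> \<exists>D2. dense_wrt d2 T D2 \<and> |D2| \<le>o |D1|"
  shows "same_density d1 S d2 T"
proof -
  obtain D1 D2 where D1: "density_witness d1 S D1" and D2: "density_witness d2 T D2"
    using density_witness_exists assms(1,2) by metis
  have "|D1| \<le>o |D2|"
    using assms(3)[OF D2] density_witness_le[OF D1] ordLeq_transitive by blast
  moreover have "|D2| \<le>o |D1|"
    using assms(4)[OF D1] density_witness_le[OF D2] ordLeq_transitive by blast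
  ultimately show ?thesis
    unfolding same_density_def using D1 D2 ordIso_iff_ordLeq by blast
qed

text \<open>Pick one point of \<open>A\<close> in each nonempty \<open>\<delta>\<close>-ball of radius \<open>1/(n+1)\<close> around a
  point of \<open>G\<close>.\<close>
lemma exists_dense_card_le_Times_nat:
  assumes approx: "\<And>a e. a \<in> A \<Longrightarrow> e > 0 \<Longrightarrow> \<exists>q\<in>G. \<delta> a q < e"
    and tri: "\<And>x y q. x \<in> A \<Longrightarrow> y \<in> A \<Longrightarrow> q \<in> G \<Longrightarrow> d x y \<le> \<delta> x q + \<delta> y q"
  shows "\<exists>D. dense_wrt d A D \<and> |D| \<le>o |G \<times> (UNIV::nat set)|"
proof -
  define P where "P = (\<lambda>(q, n::nat) a. a \<in> A \<and> \<delta> a q < inverse (real (Suc n)))"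
  define K where "K = {p \<in> G \<times> (UNIV::nat set). \<exists>a. P p a}"
  define pick where "pick = (\<lambda>p. SOME a. P p a)"
  have pick: "P p (pick p)" if "p \<in> K" for p
    using that someI_ex[of "P p"] unfolding K_def pick_def by blast
  have "pick ` K \<subseteq> A" using pick unfolding P_def by fastforce
  moreover have "\<exists>y\<in>pick ` K. d x y < e" if x: "x \<in> A" and e: "e > 0" for x e
  proof -
    obtain n where n: "inverse (real (Suc n)) < e / 2"
      using e reals_Archimedean[of "e / 2"] by auto
    obtain q where q: "q \<in> G" "\<delta> x q < inverse (real (Suc n))"
      using approx[OF x, of "inverse (real (Suc n))"] by auto
    then have K: "(q, n) \<in> K" unfolding K_def P_def using x by auto
    with pick have a: "pick (q, n) \<in> A" "\<delta> (pick (q, n)) q < inverse (real (Suc n))"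
      unfolding P_def by auto
    have "d x (pick (q, n)) < e" using tri[OF x a(1) q(1)] q(2) a(2) n by linarith
    with K show ?thesis by blast
  qed
  moreover have "|pick ` K| \<le>o |G \<times> (UNIV::nat set)|"
    using card_of_image[of pick K] card_of_mono1[of K "G \<times> UNIV"] ordLeq_transitive
    unfolding K_def by blast
  ultimately show ?thesis unfolding dense_wrt_def by blast
qed

lemma dense_wrt_finite_imp_subset:
  assumes dense: "dense_wrt d S D" and "finite D"
    and pos: "\<And>x y. x \<in> S \<Longrightarrow> y \<in> S \<Longrightarrow> x \<noteq> y \<Longrightarrow> d x y > 0"
  shows "S \<subseteq> D"
proof
  fix x assume x: "x \<in> S"
  show "x \<in> D"
  proof (rule ccontr)
    assume "x \<notin> D"
    then have "\<forall>y\<in>D. d x y > 0" using pos[OF x] dense unfolding dense_wrt_def by blast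
    define m where "m = Min (insert 1 ((\<lambda>y. d x y) ` D))"
    have "m > 0" unfolding m_def using \<open>\<forall>y\<in>D. d x y > 0\<close> \<open>finite D\<close> by simp
    then obtain y where "y \<in> D" "d x y < m" using dense x unfolding dense_wrt_def by blast
    moreover have "m \<le> d x y" unfolding m_def using \<open>y \<in> D\<close> \<open>finite D\<close> by simp
    ultimately show False by simp
  qed
qed

lemma dense_wrt_infinite:
  assumes "dense_wrt d S D" "infinite S"
    and "\<And>x y. x \<in> S \<Longrightarrow> y \<in> S \<Longrightarrow> x \<noteq> y \<Longrightarrow> d x y > 0"
  shows "infinite D"
  using dense_wrt_finite_imp_subset[OF assms(1) _ assms(3)] assms(2) finite_subset by blast

lemma card_of_Un_le_infinite:
  "infinite C \<Longrightarrow> |A| \<le>o |C| \<Longrightarrow> |B| \<le>o |C| \<Longrightarrow> |A \<union> B| \<le>o |C|"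
  using card_of_Un_ordLeq_infinite_Field[of "|C|" A B] by (simp add: Field_card_of card_of_card_order_on)

lemma card_of_Times_le_infinite:
  "infinite C \<Longrightarrow> |A| \<le>o |C| \<Longrightarrow> |B| \<le>o |C| \<Longrightarrow> |A \<times> B| \<le>o |C|"
  using card_of_Times_ordLeq_infinite_Field[of "|C|" A B] by (simp add: Field_card_of card_of_card_order_on)

lemma card_of_countable_le_infinite:
  assumes "countable A" "infinite C" shows "|A| \<le>o |C|"
proof -
  have "|A| \<le>o |UNIV::nat set|"
    using assms(1) unfolding countable_def card_of_ordLeq[symmetric] by blast
  then show ?thesis using assms(2) infinite_iff_card_of_nat ordLeq_transitive by blast
qed

section \<open>The norm and distance of \<open>H\<^sub>0[E]\<close>\<close>

definition fbl_admissible :: "nat \<Rightarrow> (nat \<Rightarrow> ('a::real_normed_vector \<Rightarrow>\<^sub>L real)) \<Rightarrow> bool" where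
  "fbl_admissible n xs \<longleftrightarrow> (\<forall>x::'a. norm x \<le> 1 \<longrightarrow> (\<Sum>k<n. \<bar>xs k x\<bar>) \<le> 1)"

lemma fbl_sums_eq: "fbl_sums f = {(\<Sum>k<n. \<bar>f (xs k)\<bar>) | n xs. fbl_admissible n xs}"
  unfolding fbl_sums_def fbl_admissible_def by simp

lemma fbl_sums_nonempty: "fbl_sums f \<noteq> {}"
proof -
  have "fbl_admissible 0 xs" for xs unfolding fbl_admissible_def by simp
  then show ?thesis unfolding fbl_sums_eq by blast
qed

lemma fbl_norm_leI:
  fixes h :: "('a::real_normed_vector \<Rightarrow>\<^sub>L real) \<Rightarrow> real"
  assumes "\<And>n xs. fbl_admissible n xs \<Longrightarrow> (\<Sum>k<n. \<bar>h (xs k)\<bar>) \<le> B"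
  shows "bdd_above (fbl_sums h) \<and> fbl_norm h \<le> B"
proof -
  have "\<forall>s\<in>fbl_sums h. s \<le> B" using assms unfolding fbl_sums_eq by blast
  then show ?thesis unfolding fbl_norm_def using fbl_sums_nonempty
    by (meson bdd_above.unfold cSup_least)
qed

lemma fbl_sum_le_norm:
  assumes "bdd_above (fbl_sums h)" "fbl_admissible n xs"
  shows "(\<Sum>k<n. \<bar>h (xs k)\<bar>) \<le> fbl_norm h"
  unfolding fbl_norm_def using assms unfolding fbl_sums_eq by (blast intro: cSup_upper)

lemma fbl_norm_nonneg: "bdd_above (fbl_sums h) \<Longrightarrow> 0 \<le> fbl_norm h"
  using fbl_sum_le_norm[of h 0] unfolding fbl_admissible_def by simp

lemma fbl_sums_abs: "fbl_sums (\<lambda>x. \<bar>f x\<bar>) = fbl_sums f"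
  unfolding fbl_sums_def by simp

lemma fbl_norm_abs: "fbl_norm (\<lambda>x. \<bar>f x\<bar>) = fbl_norm f"
  unfolding fbl_norm_def fbl_sums_abs ..

lemma fbl_norm_mono:
  fixes h g :: "('a::real_normed_vector \<Rightarrow>\<^sub>L real) \<Rightarrow> real"
  assumes "bdd_above (fbl_sums g)" "\<And>x. \<bar>h x\<bar> \<le> \<bar>g x\<bar>"
  shows "bdd_above (fbl_sums h) \<and> fbl_norm h \<le> fbl_norm g"
proof (rule fbl_norm_leI)
  fix n and xs :: "nat \<Rightarrow> 'a \<Rightarrow>\<^sub>L real" assume "fbl_admissible n xs"
  then show "(\<Sum>k<n. \<bar>h (xs k)\<bar>) \<le> fbl_norm g"
    using fbl_sum_le_norm[OF assms(1)] sum_mono[of "{..<n}" "\<lambda>k. \<bar>h (xs k)\<bar>"] assms(2)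
    by (meson order_trans)
qed

lemma fbl_norm_add:
  fixes f g :: "('a::real_normed_vector \<Rightarrow>\<^sub>L real) \<Rightarrow> real"
  assumes "bdd_above (fbl_sums f)" "bdd_above (fbl_sums g)"
  shows "bdd_above (fbl_sums (\<lambda>x. f x + g x)) \<and> fbl_norm (\<lambda>x. f x + g x) \<le> fbl_norm f + fbl_norm g"
proof (rule fbl_norm_leI)
  fix n and xs :: "nat \<Rightarrow> 'a \<Rightarrow>\<^sub>L real" assume c: "fbl_admissible n xs"
  have "(\<Sum>k<n. \<bar>f (xs k) + g (xs k)\<bar>) \<le> (\<Sum>k<n. \<bar>f (xs k)\<bar>) + (\<Sum>k<n. \<bar>g (xs k)\<bar>)"
    by (simp add: sum.distrib[symmetric] sum_mono abs_triangle_ineq)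
  then show "(\<Sum>k<n. \<bar>f (xs k) + g (xs k)\<bar>) \<le> fbl_norm f + fbl_norm g"
    using fbl_sum_le_norm[OF assms(1) c] fbl_sum_le_norm[OF assms(2) c] by linarith
qed

lemma fbl_norm_scale:
  fixes f :: "('a::real_normed_vector \<Rightarrow>\<^sub>L real) \<Rightarrow> real"
  assumes "bdd_above (fbl_sums f)"
  shows "bdd_above (fbl_sums (\<lambda>x. c * f x)) \<and> fbl_norm (\<lambda>x. c * f x) \<le> \<bar>c\<bar> * fbl_norm f"
proof (rule fbl_norm_leI)
  fix n and xs :: "nat \<Rightarrow> 'a \<Rightarrow>\<^sub>L real" assume "fbl_admissible n xs"
  then show "(\<Sum>k<n. \<bar>c * f (xs k)\<bar>) \<le> \<bar>c\<bar> * fbl_norm f"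
    using fbl_sum_le_norm[OF assms] by (simp add: abs_mult sum_distrib_left[symmetric] mult_left_mono)
qed

lemma pos_homogeneous_zero:
  assumes "pos_homogeneous h" shows "h 0 = 0"
proof -
  have "h ((2::real) *\<^sub>R 0) = 2 * h 0"
    using assms unfolding pos_homogeneous_def by (metis zero_less_numeral)
  then show ?thesis by simp
qed

lemma abs_le_fbl_norm_mult_norm:
  assumes "pos_homogeneous h" "bdd_above (fbl_sums h)"
  shows "\<bar>h xs\<bar> \<le> fbl_norm h * norm xs"
proof (cases "xs = 0")
  case True then show ?thesis using pos_homogeneous_zero[OF assms(1)] by simp
next
  case False
  then have np: "norm xs > 0" by simp
  let ?y = "(1 / norm xs) *\<^sub>R xs"
  have "\<bar>xs x\<bar> \<le> norm xs" if "norm x \<le> 1" for x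
    using norm_blinfun[of xs x] mult_left_le[OF that norm_ge_zero[of xs]] by simp
  then have "fbl_admissible 1 (\<lambda>_. ?y)"
    unfolding fbl_admissible_def using np by (simp add: blinfun.scaleR_left abs_mult divide_le_eq)
  then have "\<bar>h ?y\<bar> \<le> fbl_norm h" using fbl_sum_le_norm[OF assms(2)] by fastforce
  moreover have "h ?y = h xs / norm xs" using assms(1) np unfolding pos_homogeneous_def by simp
  ultimately show ?thesis using np by (simp add: divide_le_eq mult.commute)
qed

lemma H0_iff: "h \<in> H0 \<longleftrightarrow> pos_homogeneous h \<and> bdd_above (fbl_sums h)"
  unfolding H0_def by simp

lemma H0_add: "f \<in> H0 \<Longrightarrow> g \<in> H0 \<Longrightarrow> (\<lambda>x. f x + g x) \<in> H0"
  unfolding H0_iff pos_homogeneous_def using fbl_norm_add[of f g] by (auto simp: algebra_simps)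

lemma H0_scale: "f \<in> H0 \<Longrightarrow> (\<lambda>x. c * f x) \<in> H0"
  unfolding H0_iff pos_homogeneous_def using fbl_norm_scale[of f c] by (auto simp: algebra_simps)

lemma H0_diff: "f \<in> H0 \<Longrightarrow> g \<in> H0 \<Longrightarrow> (\<lambda>x. f x - g x) \<in> H0"
  using H0_add[of f "\<lambda>x. (-1) * g x"] H0_scale[of g "-1"] by simp

lemma H0_max: "f \<in> H0 \<Longrightarrow> g \<in> H0 \<Longrightarrow> (\<lambda>x. max (f x) (g x)) \<in> H0"
proof -
  assume f: "f \<in> H0" and g: "g \<in> H0"
  then have "bdd_above (fbl_sums (\<lambda>x. \<bar>f x\<bar> + \<bar>g x\<bar>))"
    using fbl_norm_add[of "\<lambda>x. \<bar>f x\<bar>" "\<lambda>x. \<bar>g x\<bar>"] unfolding H0_iff fbl_sums_abs by simp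
  then have "bdd_above (fbl_sums (\<lambda>x. max (f x) (g x)))"
    using fbl_norm_mono[of "\<lambda>x. \<bar>f x\<bar> + \<bar>g x\<bar>" "\<lambda>x. max (f x) (g x)"] by fastforce
  moreover have "max (t * f x) (t * g x) = t * max (f x) (g x)" if "t > 0" for t :: real and x
    using that by (simp add: max_def)
  ultimately show ?thesis using f g unfolding H0_iff pos_homogeneous_def by simp
qed

lemma H0_min:
  assumes "f \<in> H0" "g \<in> H0" shows "(\<lambda>x. min (f x) (g x)) \<in> H0"
proof -
  have "(\<lambda>x. (-1) * max ((-1) * f x) ((-1) * g x)) \<in> H0" by (intro H0_scale H0_max assms)
  moreover have "(\<lambda>x. (-1) * max ((-1) * f x) ((-1) * g x)) = (\<lambda>x. min (f x) (g x))"
    by (auto simp: max_def min_def)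
  ultimately show ?thesis by simp
qed

lemma fbl_norm_delta_le:
  fixes x :: "'a::real_normed_vector"
  shows "bdd_above (fbl_sums (delta x)) \<and> fbl_norm (delta x) \<le> norm x"
proof (rule fbl_norm_leI)
  fix n and xs :: "nat \<Rightarrow> 'a \<Rightarrow>\<^sub>L real" assume adm: "fbl_admissible n xs"
  show "(\<Sum>k<n. \<bar>delta x (xs k)\<bar>) \<le> norm x"
  proof (cases "x = 0")
    case False
    then have "(\<Sum>k<n. \<bar>xs k ((1 / norm x) *\<^sub>R x)\<bar>) \<le> 1"
      using adm unfolding fbl_admissible_def by simp
    then show ?thesis using False
      by (simp add: delta_def blinfun.scaleR_right abs_mult sum_divide_distrib[symmetric] divide_le_eq)
  qed (simp add: delta_def)
qed

lemma delta_H0: "delta x \<in> H0"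
  using fbl_norm_delta_le[of x] unfolding H0_iff pos_homogeneous_def delta_def
  by (simp add: blinfun.scaleR_left)

lemma delta_diff: "(\<lambda>y. delta x y - delta z y) = delta (x - z)"
  unfolding delta_def by (simp add: blinfun.diff_right)

lemma fbl_dist_commute: "fbl_dist f g = fbl_dist g f"
proof -
  have "(\<lambda>x. \<bar>f x - g x\<bar>) = (\<lambda>x. \<bar>g x - f x\<bar>)" by (simp add: abs_minus_commute)
  then show ?thesis unfolding fbl_dist_def by (metis fbl_norm_abs)
qed

lemma fbl_dist_self:
  fixes f :: "('a::real_normed_vector \<Rightarrow>\<^sub>L real) \<Rightarrow> real"
  shows "fbl_dist f f = 0"
proof -
  have "bdd_above (fbl_sums (\<lambda>_::'a \<Rightarrow>\<^sub>L real. 0::real)) \<and> fbl_norm (\<lambda>_::'a \<Rightarrow>\<^sub>L real. 0::real) \<le> 0"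
    by (rule fbl_norm_leI) simp
  then show ?thesis unfolding fbl_dist_def
    using fbl_norm_nonneg[of "\<lambda>_::'a \<Rightarrow>\<^sub>L real. 0::real"] by auto
qed

lemma fbl_dist_nonneg: "f \<in> H0 \<Longrightarrow> g \<in> H0 \<Longrightarrow> 0 \<le> fbl_dist f g"
  unfolding fbl_dist_def using H0_diff fbl_norm_nonneg unfolding H0_iff by blast

lemma fbl_dist_triangle:
  assumes "f \<in> H0" "g \<in> H0" "h \<in> H0"
  shows "fbl_dist f g \<le> fbl_dist f h + fbl_dist h g"
  using fbl_norm_add[of "\<lambda>x. f x - h x" "\<lambda>x. h x - g x"] H0_diff[of f h] H0_diff[of h g] assms
  unfolding fbl_dist_def H0_iff by simp

lemma fbl_dist_triangle2:
  "f \<in> H0 \<Longrightarrow> g \<in> H0 \<Longrightarrow> h \<in> H0 \<Longrightarrow> fbl_dist f g \<le> fbl_dist f h + fbl_dist g h"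
  using fbl_dist_triangle[of f g h] fbl_dist_commute[of h g] by simp

lemma abs_diff_le_fbl_dist:
  assumes "f \<in> H0" "g \<in> H0"
  shows "\<bar>f xs - g xs\<bar> \<le> fbl_dist f g * norm xs"
  using abs_le_fbl_norm_mult_norm[of "\<lambda>x. f x - g x"] H0_diff[OF assms]
  unfolding fbl_dist_def H0_iff by blast

lemma fbl_dist_pos:
  assumes "f \<in> H0" "g \<in> H0" "f \<noteq> g"
  shows "fbl_dist f g > 0"
proof -
  obtain xs where "f xs \<noteq> g xs" using assms(3) by blast
  then have "0 < fbl_dist f g * norm xs" using abs_diff_le_fbl_dist[OF assms(1,2), of xs] by linarith
  then show ?thesis using fbl_dist_nonneg[OF assms(1,2)] by (simp add: zero_less_mult_iff)
qed

section \<open>Elementary properties of \<open>FBL[E]\<close>\<close>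

lemma FBL_subset: "closed_sublattice_gen S \<Longrightarrow> FBL \<subseteq> S"
  unfolding FBL_def by blast

lemma closed_sublattice_gen_H0: "closed_sublattice_gen H0"
  unfolding closed_sublattice_gen_def by (simp add: delta_H0 H0_add H0_scale H0_max H0_min)

lemma FBL_subset_H0: "FBL \<subseteq> H0"
  by (rule FBL_subset[OF closed_sublattice_gen_H0])

lemma closed_sublattice_genD:
  assumes "closed_sublattice_gen S"
  shows "delta x \<in> S" "f \<in> S \<Longrightarrow> g \<in> S \<Longrightarrow> (\<lambda>y. f y + g y) \<in> S"
    "f \<in> S \<Longrightarrow> (\<lambda>y. c * f y) \<in> S"
    "f \<in> S \<Longrightarrow> g \<in> S \<Longrightarrow> (\<lambda>y. max (f y) (g y)) \<in> S"
    "f \<in> S \<Longrightarrow> g \<in> S \<Longrightarrow> (\<lambda>y. min (f y) (g y)) \<in> S"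
  using assms unfolding closed_sublattice_gen_def by simp_all

lemma FBL_closed:
  assumes "f \<in> FBL" "g \<in> FBL"
  shows "delta x \<in> FBL" "(\<lambda>y. f y + g y) \<in> FBL" "(\<lambda>y. c * f y) \<in> FBL"
    "(\<lambda>y. max (f y) (g y)) \<in> FBL" "(\<lambda>y. min (f y) (g y)) \<in> FBL"
  using assms unfolding FBL_def by (auto intro: closed_sublattice_genD)

lemma FBL_diff: "f \<in> FBL \<Longrightarrow> g \<in> FBL \<Longrightarrow> (\<lambda>y. f y - g y) \<in> FBL"
  using FBL_closed(2)[of f "\<lambda>y. (-1) * g y"] FBL_closed(3)[of g g "-1"] by simp

lemma fbl_dist_eventually_less:
  assumes "(\<lambda>n. fbl_dist (s n) h) \<longlonglongrightarrow> 0" "e > 0"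
  obtains n where "fbl_dist (s n) h < e"
  using order_tendstoD(2)[OF assms] by (meson eventually_sequentially order_refl)

text \<open>Convergence in \<open>fbl_dist\<close> is uniform convergence on bounded subsets of \<open>E\<^sup>*\<close>,
  hence preserves continuity.\<close>
lemma continuous_on_fbl_limit:
  fixes h :: "('a::real_normed_vector \<Rightarrow>\<^sub>L real) \<Rightarrow> real"
  assumes s: "\<And>n. s n \<in> H0" "\<And>n. continuous_on UNIV (s n)" and h: "h \<in> H0"
    and lim: "(\<lambda>n. fbl_dist (s n) h) \<longlonglongrightarrow> 0"
  shows "continuous_on UNIV h"
proof -
  have "\<exists>r>0. \<forall>y. dist y x < r \<longrightarrow> dist (h y) (h x) < e" if e: "e > 0" for x e
  proof -
    define M where "M = norm x + 1"
    have M: "M > 0" unfolding M_def by (simp add: add_nonneg_pos)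
    obtain N where N: "fbl_dist (s N) h < e / (3 * M)"
      using fbl_dist_eventually_less[OF lim, of "e / (3 * M)"] e M by auto
    obtain r where r: "r > 0" "\<forall>y. dist y x < r \<longrightarrow> dist (s N y) (s N x) < e / 3"
      using s(2)[of N] e unfolding continuous_on_iff by (metis UNIV_I divide_pos_pos zero_less_numeral)
    have close: "\<bar>s N z - h z\<bar> \<le> e / 3" if "norm z \<le> M" for z
    proof -
      have "\<bar>s N z - h z\<bar> \<le> fbl_dist (s N) h * M"
        using abs_diff_le_fbl_dist[OF s(1) h, of N z] that fbl_dist_nonneg[OF s(1) h, of N]
        by (meson mult_left_mono order_trans)
      also have "\<dots> \<le> e / 3" using N M by (simp add: field_simps)
      finally show ?thesis .
    qed
    have "dist (h y) (h x) < e" if y: "dist y x < min r 1" for y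
    proof -
      have "norm y \<le> M" using y norm_triangle_ineq2[of y x] unfolding M_def dist_norm by linarith
      moreover have "\<bar>s N y - s N x\<bar> < e / 3" using r(2) y by (simp add: dist_real_def)
      ultimately show ?thesis
        using close[of y] close[of x] unfolding M_def dist_real_def abs_le_iff abs_less_iff by simp
    qed
    then show ?thesis using r(1) by (intro exI[of _ "min r 1"]) auto
  qed
  then show ?thesis unfolding continuous_on_iff by auto
qed

lemma closed_sublattice_gen_continuous:
  "closed_sublattice_gen {h \<in> H0. continuous_on UNIV (h :: ('a::real_normed_vector \<Rightarrow>\<^sub>L real) \<Rightarrow> real)}"
  unfolding closed_sublattice_gen_def
proof (intro conjI ballI allI impI; (elim conjE)?)
  fix x :: 'a
  have "continuous_on UNIV (\<lambda>y::'a \<Rightarrow>\<^sub>L real. blinfun_apply y x)"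
    by (intro continuous_intros)
  then show "delta x \<in> {h \<in> H0. continuous_on UNIV h}"
    using delta_H0 unfolding delta_def by auto
next
  fix s :: "nat \<Rightarrow> ('a \<Rightarrow>\<^sub>L real) \<Rightarrow> real" and h
  assume "\<forall>n. s n \<in> {h \<in> H0. continuous_on UNIV h}" "h \<in> H0" "(\<lambda>n. fbl_dist (s n) h) \<longlonglongrightarrow> 0"
  then show "h \<in> {h \<in> H0. continuous_on UNIV h}" using continuous_on_fbl_limit[of s h] by auto
qed (simp_all add: H0_add H0_scale H0_max H0_min continuous_on_add continuous_on_mult_left
    continuous_on_max continuous_on_min)

lemma FBL_continuous: "f \<in> FBL \<Longrightarrow> continuous_on UNIV f"
  using FBL_subset[OF closed_sublattice_gen_continuous] by blast

section \<open>An upper bound for the density character of \<open>FBL[E]\<close>\<close>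

primrec rat_lattice_level :: "'a::real_normed_vector set \<Rightarrow> nat \<Rightarrow> (('a \<Rightarrow>\<^sub>L real) \<Rightarrow> real) set" where
  "rat_lattice_level D 0 = delta ` D"
| "rat_lattice_level D (Suc n) = rat_lattice_level D n
     \<union> (\<lambda>(a, b) y. a y + b y) ` (rat_lattice_level D n \<times> rat_lattice_level D n)
     \<union> (\<lambda>(r, a) y. of_rat r * a y) ` (UNIV \<times> rat_lattice_level D n)
     \<union> (\<lambda>(a, b) y. max (a y) (b y)) ` (rat_lattice_level D n \<times> rat_lattice_level D n)
     \<union> (\<lambda>(a, b) y. min (a y) (b y)) ` (rat_lattice_level D n \<times> rat_lattice_level D n)"

definition rat_lattice :: "'a::real_normed_vector set \<Rightarrow> (('a \<Rightarrow>\<^sub>L real) \<Rightarrow> real) set" where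
  "rat_lattice D = (\<Union>n. rat_lattice_level D n)"

lemma rat_lattice_subset_H0: "rat_lattice D \<subseteq> H0"
proof -
  have "rat_lattice_level D n \<subseteq> H0" for n
    by (induction n) (auto intro!: delta_H0 H0_add H0_scale H0_max H0_min)
  then show ?thesis unfolding rat_lattice_def by blast
qed

lemma rat_lattice_level_mono: "m \<le> n \<Longrightarrow> rat_lattice_level D m \<subseteq> rat_lattice_level D n"
  by (induction n) (auto simp: le_Suc_eq)

lemma rat_lattice_delta: "x \<in> D \<Longrightarrow> delta x \<in> rat_lattice D"
  unfolding rat_lattice_def using rat_lattice_level.simps(1) by blast

lemma rat_lattice_closed:
  assumes "a \<in> rat_lattice D" "b \<in> rat_lattice D"
  shows "(\<lambda>y. a y + b y) \<in> rat_lattice D" "(\<lambda>y. of_rat r * a y) \<in> rat_lattice D"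
    and "(\<lambda>y. max (a y) (b y)) \<in> rat_lattice D" "(\<lambda>y. min (a y) (b y)) \<in> rat_lattice D"
proof -
  obtain m k where "a \<in> rat_lattice_level D m" "b \<in> rat_lattice_level D k"
    using assms unfolding rat_lattice_def by blast
  then have "a \<in> rat_lattice_level D (max m k)" "b \<in> rat_lattice_level D (max m k)"
    using rat_lattice_level_mono[of m "max m k" D] rat_lattice_level_mono[of k "max m k" D] by auto
  then have "(\<lambda>y. a y + b y) \<in> rat_lattice_level D (Suc (max m k))"
    "(\<lambda>y. of_rat r * a y) \<in> rat_lattice_level D (Suc (max m k))"
    "(\<lambda>y. max (a y) (b y)) \<in> rat_lattice_level D (Suc (max m k))"
    "(\<lambda>y. min (a y) (b y)) \<in> rat_lattice_level D (Suc (max m k))"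
    by force+
  then show "(\<lambda>y. a y + b y) \<in> rat_lattice D" "(\<lambda>y. of_rat r * a y) \<in> rat_lattice D"
    "(\<lambda>y. max (a y) (b y)) \<in> rat_lattice D" "(\<lambda>y. min (a y) (b y)) \<in> rat_lattice D"
    unfolding rat_lattice_def by blast+
qed

lemma card_of_rat_lattice_le:
  assumes "infinite D" shows "|rat_lattice D| \<le>o |D|"
proof -
  have "|rat_lattice_level D n| \<le>o |D|" for n
  proof (induction n)
    case 0 then show ?case using card_of_image by simp
  next
    case (Suc n)
    let ?L = "rat_lattice_level D n"
    have "|?L \<times> ?L| \<le>o |D|" "|(UNIV::rat set) \<times> ?L| \<le>o |D|"
      using card_of_Times_le_infinite[OF assms] Suc.IH
        card_of_countable_le_infinite[OF countableI_type assms] by blast+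
    then have "|F ` (?L \<times> ?L)| \<le>o |D|" "|G ` ((UNIV::rat set) \<times> ?L)| \<le>o |D|"
      for F G :: "_ \<Rightarrow> ('a \<Rightarrow>\<^sub>L real) \<Rightarrow> real"
      by (meson card_of_image ordLeq_transitive)+
    then show ?case
      unfolding rat_lattice_level.simps by (simp add: card_of_Un_le_infinite[OF assms] Suc.IH)
  qed
  then show ?thesis unfolding rat_lattice_def
    by (intro card_of_UNION_ordLeq_infinite[OF assms] card_of_countable_le_infinite assms) auto
qed

definition fbl_closure :: "(('a::real_normed_vector \<Rightarrow>\<^sub>L real) \<Rightarrow> real) set \<Rightarrow> (('a \<Rightarrow>\<^sub>L real) \<Rightarrow> real) set" where
  "fbl_closure G = {h \<in> H0. \<forall>e>0. \<exists>q\<in>G. fbl_dist h q < e}"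

lemma fbl_dist_le_pointwise:
  assumes "(\<lambda>y. f y - p y) \<in> H0" "(\<lambda>y. g y - q y) \<in> H0"
    and pw: "\<And>y. \<bar>F y - P y\<bar> \<le> \<bar>f y - p y\<bar> + \<bar>g y - q y\<bar>"
  shows "fbl_dist F P \<le> fbl_dist f p + fbl_dist g q"
proof -
  have "bdd_above (fbl_sums (\<lambda>y. f y - p y))" "bdd_above (fbl_sums (\<lambda>y. g y - q y))"
    using assms(1,2) unfolding H0_iff by auto
  then have "bdd_above (fbl_sums (\<lambda>y. \<bar>f y - p y\<bar> + \<bar>g y - q y\<bar>)) \<and>
      fbl_norm (\<lambda>y. \<bar>f y - p y\<bar> + \<bar>g y - q y\<bar>) \<le> fbl_dist f p + fbl_dist g q"
    using fbl_norm_add[of "\<lambda>y. \<bar>f y - p y\<bar>" "\<lambda>y. \<bar>g y - q y\<bar>"]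
    unfolding fbl_sums_abs fbl_norm_abs fbl_dist_def by simp
  then show ?thesis
    using fbl_norm_mono[of "\<lambda>y. \<bar>f y - p y\<bar> + \<bar>g y - q y\<bar>" "\<lambda>y. F y - P y"] pw
    unfolding fbl_dist_def by fastforce
qed

lemma fbl_closure_binop:
  assumes G: "G \<subseteq> H0" "\<And>p q. p \<in> G \<Longrightarrow> q \<in> G \<Longrightarrow> op p q \<in> G"
    and pw: "\<And>f g p q y. \<bar>op f g y - op p q y\<bar> \<le> \<bar>f y - p y\<bar> + \<bar>g y - q y\<bar>"
    and f: "f \<in> fbl_closure G" and g: "g \<in> fbl_closure G" and "op f g \<in> H0"
  shows "op f g \<in> fbl_closure G"
proof -
  have "\<exists>r\<in>G. fbl_dist (op f g) r < e" if e: "e > 0" for e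
  proof -
    obtain p where p: "p \<in> G" "fbl_dist f p < e / 2"
      using f e unfolding fbl_closure_def by (auto dest: spec[of _ "e / 2"])
    obtain q where q: "q \<in> G" "fbl_dist g q < e / 2"
      using g e unfolding fbl_closure_def by (auto dest: spec[of _ "e / 2"])
    have "(\<lambda>y. f y - p y) \<in> H0" "(\<lambda>y. g y - q y) \<in> H0"
      using f g p(1) q(1) G(1) H0_diff unfolding fbl_closure_def by blast+
    then have "fbl_dist (op f g) (op p q) \<le> fbl_dist f p + fbl_dist g q"
      using pw by (rule fbl_dist_le_pointwise)
    then have "fbl_dist (op f g) (op p q) < e" using p(2) q(2) by linarith
    then show ?thesis using G(2)[OF p(1) q(1)] by blast
  qed
  then show ?thesis using \<open>op f g \<in> H0\<close> unfolding fbl_closure_def by blast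
qed

lemma fbl_dist_scale_le:
  assumes "f \<in> H0" "p \<in> H0"
  shows "fbl_dist (\<lambda>y. c * f y) (\<lambda>y. r * p y) \<le> \<bar>c\<bar> * fbl_dist f p + \<bar>c - r\<bar> * fbl_norm p"
proof -
  have "fbl_dist (\<lambda>y. c * f y) (\<lambda>y. r * p y) = fbl_norm (\<lambda>y. c * (f y - p y) + (c - r) * p y)"
    unfolding fbl_dist_def by (simp add: algebra_simps)
  also have "\<dots> \<le> \<bar>c\<bar> * fbl_dist f p + \<bar>c - r\<bar> * fbl_norm p"
    using fbl_norm_add[of "\<lambda>y. c * (f y - p y)" "\<lambda>y. (c - r) * p y"]
      fbl_norm_scale[of "\<lambda>y. f y - p y" c] fbl_norm_scale[of p "c - r"] H0_diff[OF assms] assms(2)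
    unfolding H0_iff fbl_dist_def by fastforce
  finally show ?thesis .
qed

lemma exists_rat_abs_diff_less:
  fixes c e :: real
  assumes "e > 0" obtains r :: rat where "\<bar>c - of_rat r\<bar> < e"
proof -
  obtain x where x: "x \<in> \<rat>" "c < x" "x < c + e" using Rats_dense_in_real[of c "c + e"] assms by auto
  then obtain r where "x = of_rat r" by (auto elim: Rats_cases)
  with x have "\<bar>c - of_rat r\<bar> < e" by simp
  then show ?thesis by (rule that)
qed

lemma fbl_closure_scale:
  assumes G: "G \<subseteq> H0" "\<And>r p. p \<in> G \<Longrightarrow> (\<lambda>y. of_rat r * p y) \<in> G"
    and f: "f \<in> fbl_closure G"
  shows "(\<lambda>y. c * f y) \<in> fbl_closure G"
  unfolding fbl_closure_def
proof (intro CollectI conjI allI impI)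
  have fH: "f \<in> H0" using f unfolding fbl_closure_def by blast
  then show "(\<lambda>y. c * f y) \<in> H0" by (rule H0_scale)
  fix e :: real assume e: "e > 0"
  have "e / (2 * (\<bar>c\<bar> + 1)) > 0" using e by (simp add: add_nonneg_pos)
  then obtain p where p: "p \<in> G" "fbl_dist f p < e / (2 * (\<bar>c\<bar> + 1))"
    using f unfolding fbl_closure_def by (auto dest: spec[of _ "e / (2 * (\<bar>c\<bar> + 1))"])
  have pH: "p \<in> H0" using p G(1) by blast
  then have n: "0 \<le> fbl_norm p" using fbl_norm_nonneg unfolding H0_iff by blast
  obtain r where r: "\<bar>c - of_rat r\<bar> < e / (2 * (fbl_norm p + 1))"
    using exists_rat_abs_diff_less[of "e / (2 * (fbl_norm p + 1))"] e n by auto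
  have "\<bar>c\<bar> * fbl_dist f p \<le> (\<bar>c\<bar> + 1) * fbl_dist f p"
    using fbl_dist_nonneg[OF fH pH] by (simp add: mult_right_mono)
  also have "\<dots> \<le> (\<bar>c\<bar> + 1) * (e / (2 * (\<bar>c\<bar> + 1)))"
    using p(2) by (intro mult_left_mono) auto
  also have "\<dots> = e / 2"
    using abs_ge_zero[of c] by (simp add: field_simps del: abs_ge_zero)
  finally have 1: "\<bar>c\<bar> * fbl_dist f p \<le> e / 2" .
  have "\<bar>c - of_rat r\<bar> * fbl_norm p \<le> e / (2 * (fbl_norm p + 1)) * fbl_norm p"
    using r n by (intro mult_right_mono) auto
  also have "\<dots> < e / (2 * (fbl_norm p + 1)) * (fbl_norm p + 1)"
    using e n by (intro mult_strict_left_mono) auto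
  also have "\<dots> = e / 2" using n by (simp add: field_simps)
  finally have "\<bar>c - of_rat r\<bar> * fbl_norm p < e / 2" .
  then have "fbl_dist (\<lambda>y. c * f y) (\<lambda>y. of_rat r * p y) < e"
    using fbl_dist_scale_le[OF fH pH, of c "of_rat r"] 1 by linarith
  then show "\<exists>q\<in>G. fbl_dist (\<lambda>y. c * f y) q < e" using G(2)[OF p(1)] by auto
qed

lemma fbl_closure_limit:
  assumes s: "\<And>n. s n \<in> fbl_closure G" and h: "h \<in> H0" and G: "G \<subseteq> H0"
    and lim: "(\<lambda>n. fbl_dist (s n) h) \<longlonglongrightarrow> 0"
  shows "h \<in> fbl_closure G"
proof -
  have "\<exists>q\<in>G. fbl_dist h q < e" if e: "e > 0" for e
  proof -
    obtain n where n: "fbl_dist (s n) h < e / 2"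
      using fbl_dist_eventually_less[OF lim, of "e / 2"] e by auto
    obtain q where q: "q \<in> G" "fbl_dist (s n) q < e / 2"
      using s[of n] e unfolding fbl_closure_def by (auto dest: spec[of _ "e / 2"])
    have "s n \<in> H0" "q \<in> H0" using s[of n] q(1) G unfolding fbl_closure_def by auto
    then have "fbl_dist h q \<le> fbl_dist h (s n) + fbl_dist (s n) q"
      using fbl_dist_triangle h by blast
    then show ?thesis using n q fbl_dist_commute[of h "s n"] by (intro bexI[OF _ q(1)]) linarith
  qed
  then show ?thesis using h unfolding fbl_closure_def by blast
qed

lemma abs_add_diff_le: "\<bar>(a + b) - (c + d)\<bar> \<le> \<bar>a - c\<bar> + \<bar>b - (d::real)\<bar>"
  unfolding abs_real_def by auto

lemma abs_max_diff_le: "\<bar>max a b - max c d\<bar> \<le> \<bar>a - c\<bar> + \<bar>b - (d::real)\<bar>"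
  unfolding max_def abs_real_def by auto

lemma abs_min_diff_le: "\<bar>min a b - min c d\<bar> \<le> \<bar>a - c\<bar> + \<bar>b - (d::real)\<bar>"
  unfolding min_def abs_real_def by auto

lemma closed_sublattice_gen_fbl_closure_rat_lattice:
  fixes D :: "'a::real_normed_vector set"
  assumes dense: "dense_wrt dist UNIV D"
  shows "closed_sublattice_gen (fbl_closure (rat_lattice D))"
proof -
  let ?C = "fbl_closure (rat_lattice D)"
  note G = rat_lattice_subset_H0[of D]
  have C: "?C \<subseteq> H0" unfolding fbl_closure_def by blast
  have delta: "delta x \<in> ?C" for x :: 'a
  proof -
    have "\<exists>q\<in>rat_lattice D. fbl_dist (delta x) q < e" if e: "e > 0" for e
    proof -
      obtain d where d: "d \<in> D" "dist x d < e" using dense e unfolding dense_wrt_def by blast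
      have "fbl_dist (delta x) (delta d) \<le> norm (x - d)"
        using fbl_norm_delta_le[of "x - d"] unfolding fbl_dist_def delta_diff by simp
      then have "fbl_dist (delta x) (delta d) < e" using d(2) by (simp add: dist_norm)
      then show ?thesis using rat_lattice_delta[OF d(1)] by blast
    qed
    then show ?thesis using delta_H0 unfolding fbl_closure_def by blast
  qed
  have binop: "(\<lambda>y. f y + g y) \<in> ?C" "(\<lambda>y. max (f y) (g y)) \<in> ?C" "(\<lambda>y. min (f y) (g y)) \<in> ?C"
    if f: "f \<in> ?C" and g: "g \<in> ?C" for f g
  proof -
    have H: "f \<in> H0" "g \<in> H0" using f g C by blast+
    show "(\<lambda>y. f y + g y) \<in> ?C"
      by (rule fbl_closure_binop[where op = "\<lambda>a b y. a y + b y", OF G _ _ f g H0_add[OF H]])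
        (simp_all add: rat_lattice_closed abs_add_diff_le)
    show "(\<lambda>y. max (f y) (g y)) \<in> ?C"
      by (rule fbl_closure_binop[where op = "\<lambda>a b y. max (a y) (b y)", OF G _ _ f g H0_max[OF H]])
        (simp_all add: rat_lattice_closed abs_max_diff_le)
    show "(\<lambda>y. min (f y) (g y)) \<in> ?C"
      by (rule fbl_closure_binop[where op = "\<lambda>a b y. min (a y) (b y)", OF G _ _ f g H0_min[OF H]])
        (simp_all add: rat_lattice_closed abs_min_diff_le)
  qed
  have scale: "(\<lambda>y. c * f y) \<in> ?C" if "f \<in> ?C" for f c
    using fbl_closure_scale[OF G rat_lattice_closed(2) that] .
  have limit: "\<forall>s h. (\<forall>n. s n \<in> ?C) \<and> h \<in> H0 \<and> (\<lambda>n. fbl_dist (s n) h) \<longlonglongrightarrow> 0 \<longrightarrow> h \<in> ?C"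
    using fbl_closure_limit[OF _ _ G] by blast
  show ?thesis unfolding closed_sublattice_gen_def using C delta binop scale limit by simp
qed

lemma exists_dense_card_le_FBL:
  fixes D :: "'a::real_normed_vector set" and A :: "(('a \<Rightarrow>\<^sub>L real) \<Rightarrow> real) set"
  assumes dense: "dense_wrt dist UNIV D" and inf: "infinite D" and A: "A \<subseteq> FBL"
  shows "\<exists>D'. dense_wrt fbl_dist A D' \<and> |D'| \<le>o |D|"
proof -
  have AC: "A \<subseteq> fbl_closure (rat_lattice D)"
    using A FBL_subset[OF closed_sublattice_gen_fbl_closure_rat_lattice[OF dense]] by (rule order_trans)
  have approx: "\<exists>q\<in>rat_lattice D. fbl_dist a q < e" if "a \<in> A" "e > 0" for a e
    using that AC unfolding fbl_closure_def by blast
  have AH: "A \<subseteq> H0" using A FBL_subset_H0 by (rule order_trans)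
  have tri: "fbl_dist x y \<le> fbl_dist x q + fbl_dist y q"
    if "x \<in> A" "y \<in> A" "q \<in> rat_lattice D" for x y q
    using that AH rat_lattice_subset_H0 by (intro fbl_dist_triangle2) auto
  obtain D' where D': "dense_wrt fbl_dist A D'" "|D'| \<le>o |rat_lattice D \<times> (UNIV::nat set)|"
    using exists_dense_card_le_Times_nat[of A "rat_lattice D" fbl_dist fbl_dist, OF approx tri] by blast
  have "|rat_lattice D \<times> (UNIV::nat set)| \<le>o |D|"
    using card_of_Times_le_infinite[OF inf card_of_rat_lattice_le[OF inf]
        card_of_countable_le_infinite[OF countableI_type inf]] .
  then show ?thesis using D' ordLeq_transitive by blast
qed

section \<open>Norming functionals\<close>

definition sublinear :: "('a::real_vector \<Rightarrow> real) \<Rightarrow> bool" where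
  "sublinear q \<longleftrightarrow> (\<forall>x y. q (x + y) \<le> q x + q y) \<and> (\<forall>t\<ge>0. \<forall>x. q (t *\<^sub>R x) = t * q x)"

lemma sublinear_add: "sublinear q \<Longrightarrow> q (x + y) \<le> q x + q y"
  unfolding sublinear_def by blast

lemma sublinear_scale: "sublinear q \<Longrightarrow> t \<ge> 0 \<Longrightarrow> q (t *\<^sub>R x) = t * q x"
  unfolding sublinear_def by blast

lemma sublinear_zero: "sublinear q \<Longrightarrow> q 0 = 0"
  using sublinear_scale[of q 0 0] by simp

lemma sublinear_minus: "sublinear q \<Longrightarrow> - q (- x) \<le> q x"
  using sublinear_add[of q x "-x"] sublinear_zero[of q] by simp

lemma sublinearI:
  assumes "\<And>x y. q (x + y) \<le> q x + q y" "\<And>t x. t \<ge> 0 \<Longrightarrow> q (t *\<^sub>R x) = t * q x"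
  shows "sublinear q" unfolding sublinear_def using assms by blast

lemma sublinearI2:
  assumes add: "\<And>x y. q (x + y) \<le> q x + q y" and scale: "\<And>t x. t > 0 \<Longrightarrow> q (t *\<^sub>R x) \<le> t * q x"
    and "q 0 \<le> 0"
  shows "sublinear q"
proof (rule sublinearI[OF add])
  fix t :: real and x assume "t \<ge> 0"
  show "q (t *\<^sub>R x) = t * q x"
  proof (cases "t = 0")
    case True
    then show ?thesis using add[of 0 0] \<open>q 0 \<le> 0\<close> by simp
  next
    case False
    then have t: "t > 0" using \<open>t \<ge> 0\<close> by simp
    have "q x = q (inverse t *\<^sub>R (t *\<^sub>R x))" using t by simp
    also have "\<dots> \<le> inverse t * q (t *\<^sub>R x)" using t by (intro scale) simp
    finally have "t * q x \<le> q (t *\<^sub>R x)" using t by (simp add: field_simps)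
    then show ?thesis using scale[OF t, of x] by simp
  qed
qed

lemma sublinear_norm: "sublinear (norm :: 'a::real_normed_vector \<Rightarrow> real)"
  by (rule sublinearI) (auto simp: norm_triangle_ineq)

text \<open>The shift of \<open>q\<close> along \<open>x\<close> is a sublinear minorant of \<open>q\<close> that is at most
  \<open>-q x\<close> at \<open>-x\<close>; a minimal sublinear minorant is therefore its own shift along every
  vector, which makes it superadditive and hence linear.\<close>
definition sublinear_shift :: "('a::real_vector \<Rightarrow> real) \<Rightarrow> 'a \<Rightarrow> 'a \<Rightarrow> real" where
  "sublinear_shift q x y = (INF t\<in>{0..}. q (y + t *\<^sub>R x) - t * q x)"

lemma sublinear_shift_bdd_below:
  assumes "sublinear q" shows "bdd_below ((\<lambda>t. q (y + t *\<^sub>R x) - t * q x) ` {0..})"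
proof (rule bdd_belowI2)
  fix t :: real assume "t \<in> {0..}"
  then have "q (t *\<^sub>R x) = t * q x" using sublinear_scale[OF assms] by simp
  moreover have "q (t *\<^sub>R x) \<le> q (y + t *\<^sub>R x) + q (- y)"
    using sublinear_add[OF assms, of "y + t *\<^sub>R x" "-y"] by simp
  ultimately show "- q (- y) \<le> q (y + t *\<^sub>R x) - t * q x" by simp
qed

lemma sublinear_shift_le:
  assumes "sublinear q" "t \<ge> 0"
  shows "sublinear_shift q x y \<le> q (y + t *\<^sub>R x) - t * q x"
  using cINF_lower[OF sublinear_shift_bdd_below[OF assms(1)], of t] assms(2)
  unfolding sublinear_shift_def by simp

lemma sublinear_shift_le_self: "sublinear q \<Longrightarrow> sublinear_shift q x y \<le> q y"
  using sublinear_shift_le[of q 0 x y] by simp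

lemma sublinear_shift_minus_le: "sublinear q \<Longrightarrow> sublinear_shift q x (- x) \<le> - q x"
  using sublinear_shift_le[of q 1 x "-x"] sublinear_zero[of q] by simp

lemma sublinear_shift_geI:
  "(\<And>t. t \<ge> 0 \<Longrightarrow> c \<le> q (y + t *\<^sub>R x) - t * q x) \<Longrightarrow> c \<le> sublinear_shift q x y"
  unfolding sublinear_shift_def by (rule cINF_greatest) auto

lemma sublinear_shift_approx:
  assumes "sublinear q" "e > 0"
  obtains t where "t \<ge> 0" "q (y + t *\<^sub>R x) - t * q x < sublinear_shift q x y + e"
proof -
  have "(INF t\<in>{0..}. q (y + t *\<^sub>R x) - t * q x) < sublinear_shift q x y + e"
    using assms(2) unfolding sublinear_shift_def by simp
  moreover have "{0::real..} \<noteq> {}" by auto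
  ultimately obtain t where "t \<in> {0..}" "q (y + t *\<^sub>R x) - t * q x < sublinear_shift q x y + e"
    using cINF_less_iff[OF _ sublinear_shift_bdd_below[OF assms(1)]] by blast
  then show ?thesis using that by simp
qed

lemma sublinear_sublinear_shift:
  assumes q: "sublinear q"
  shows "sublinear (sublinear_shift q x)"
proof (rule sublinearI2)
  fix y1 y2
  show "sublinear_shift q x (y1 + y2) \<le> sublinear_shift q x y1 + sublinear_shift q x y2"
  proof (rule field_le_epsilon)
    fix e :: real assume e: "e > 0"
    obtain t1 where t1: "t1 \<ge> 0" "q (y1 + t1 *\<^sub>R x) - t1 * q x < sublinear_shift q x y1 + e/2"
      using sublinear_shift_approx[OF q, of "e/2"] e by auto
    obtain t2 where t2: "t2 \<ge> 0" "q (y2 + t2 *\<^sub>R x) - t2 * q x < sublinear_shift q x y2 + e/2"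
      using sublinear_shift_approx[OF q, of "e/2"] e by auto
    have "sublinear_shift q x (y1 + y2) \<le> q ((y1 + y2) + (t1 + t2) *\<^sub>R x) - (t1 + t2) * q x"
      using sublinear_shift_le[OF q] t1 t2 by simp
    also have "(y1 + y2) + (t1 + t2) *\<^sub>R x = (y1 + t1 *\<^sub>R x) + (y2 + t2 *\<^sub>R x)" by (simp add: algebra_simps)
    also have "q \<dots> \<le> q (y1 + t1 *\<^sub>R x) + q (y2 + t2 *\<^sub>R x)" by (rule sublinear_add[OF q])
    finally show "sublinear_shift q x (y1 + y2) \<le> sublinear_shift q x y1 + sublinear_shift q x y2 + e"
      using t1 t2 by (simp add: algebra_simps)
  qed
next
  fix t :: real and y assume tp: "t > 0"
  show "sublinear_shift q x (t *\<^sub>R y) \<le> t * sublinear_shift q x y"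
  proof -
    have "sublinear_shift q x (t *\<^sub>R y) / t \<le> sublinear_shift q x y"
    proof (rule sublinear_shift_geI)
      fix s :: real assume s: "s \<ge> 0"
      have "sublinear_shift q x (t *\<^sub>R y) \<le> q (t *\<^sub>R y + (t * s) *\<^sub>R x) - (t * s) * q x"
        using sublinear_shift_le[OF q] tp s by simp
      also have "t *\<^sub>R y + (t * s) *\<^sub>R x = t *\<^sub>R (y + s *\<^sub>R x)" by (simp add: algebra_simps)
      also have "q (t *\<^sub>R (y + s *\<^sub>R x)) - (t * s) * q x = t * (q (y + s *\<^sub>R x) - s * q x)"
        using tp by (subst sublinear_scale[OF q]) (simp_all add: algebra_simps)
      finally show "sublinear_shift q x (t *\<^sub>R y) / t \<le> q (y + s *\<^sub>R x) - s * q x"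
        using tp by (simp add: divide_le_eq mult.commute)
    qed
    then show ?thesis using tp by (simp add: divide_le_eq mult.commute)
  qed
next
  show "sublinear_shift q x 0 \<le> 0" using sublinear_shift_le_self[OF q, of x 0] sublinear_zero[OF q] by simp
qed

lemma sublinear_INF_chain:
  fixes Q :: "('a::real_vector \<Rightarrow> real) set"
  assumes Q: "Q \<noteq> {}" "\<And>q. q \<in> Q \<Longrightarrow> sublinear q"
    and ch: "\<And>q1 q2. q1 \<in> Q \<Longrightarrow> q2 \<in> Q \<Longrightarrow> q1 \<le> q2 \<or> q2 \<le> q1"
    and bdd: "\<And>x. bdd_below ((\<lambda>q. q x) ` Q)"
  shows "sublinear (\<lambda>x. INF q\<in>Q. q x)"
proof (rule sublinearI2)
  fix x y
  show "(INF q\<in>Q. q (x + y)) \<le> (INF q\<in>Q. q x) + (INF q\<in>Q. q y)"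
  proof (rule field_le_epsilon)
    fix e :: real assume e: "e > 0"
    obtain q1 where q1: "q1 \<in> Q" "q1 x < (INF q\<in>Q. q x) + e / 2"
      using cINF_less_iff[OF Q(1) bdd[of x], of "(INF q\<in>Q. q x) + e / 2"] e by auto
    obtain q2 where q2: "q2 \<in> Q" "q2 y < (INF q\<in>Q. q y) + e / 2"
      using cINF_less_iff[OF Q(1) bdd[of y], of "(INF q\<in>Q. q y) + e / 2"] e by auto
    \<comment> \<open>the smaller of \<open>q1\<close> and \<open>q2\<close> is good at both \<open>x\<close> and \<open>y\<close>\<close>
    obtain q where q: "q \<in> Q" "q x \<le> q1 x" "q y \<le> q2 y"
      using ch[OF q1(1) q2(1)] q1(1) q2(1) unfolding le_fun_def by blast
    have "(INF q\<in>Q. q (x + y)) \<le> q (x + y)" using bdd q(1) by (rule cINF_lower)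
    also have "\<dots> \<le> q x + q y" using sublinear_add[OF Q(2)[OF q(1)]] .
    finally show "(INF q\<in>Q. q (x + y)) \<le> (INF q\<in>Q. q x) + (INF q\<in>Q. q y) + e"
      using q q1 q2 by linarith
  qed
next
  fix t :: real and x assume t: "t > 0"
  have "(INF q\<in>Q. q (t *\<^sub>R x)) / t \<le> (INF q\<in>Q. q x)"
  proof (rule cINF_greatest[OF Q(1)])
    fix q assume q: "q \<in> Q"
    have "(INF q\<in>Q. q (t *\<^sub>R x)) \<le> q (t *\<^sub>R x)" using bdd q by (rule cINF_lower)
    also have "\<dots> = t * q x" using sublinear_scale[OF Q(2)[OF q]] t by simp
    finally show "(INF q\<in>Q. q (t *\<^sub>R x)) / t \<le> q x" using t by (simp add: divide_le_eq mult.commute)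
  qed
  then show "(INF q\<in>Q. q (t *\<^sub>R x)) \<le> t * (INF q\<in>Q. q x)" using t by (simp add: divide_le_eq mult.commute)
next
  obtain q0 where q0: "q0 \<in> Q" using Q(1) by blast
  have "(INF q\<in>Q. q 0) \<le> q0 0" using bdd q0 by (rule cINF_lower)
  then show "(INF q\<in>Q. q 0) \<le> 0" using sublinear_zero[OF Q(2)[OF q0]] by simp
qed

definition sublinear_minorants :: "('a::real_vector \<Rightarrow> real) \<Rightarrow> ('a \<Rightarrow> real) set" where
  "sublinear_minorants p = {q. sublinear q \<and> q \<le> p}"

lemma INF_chain_sublinear_minorants:
  fixes p :: "'a::real_vector \<Rightarrow> real"
  assumes p: "sublinear p" and Q: "Q \<subseteq> sublinear_minorants p" "Q \<noteq> {}"
    and ch: "\<And>q1 q2. q1 \<in> Q \<Longrightarrow> q2 \<in> Q \<Longrightarrow> q1 \<le> q2 \<or> q2 \<le> q1"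
  shows "(\<lambda>x. INF q\<in>Q. q x) \<in> sublinear_minorants p" "\<And>q. q \<in> Q \<Longrightarrow> (\<lambda>x. INF q\<in>Q. q x) \<le> q"
proof -
  have sq: "sublinear q" and qp: "q x \<le> p x" if "q \<in> Q" for q x
    using that Q unfolding sublinear_minorants_def le_fun_def by blast+
  have bdd: "bdd_below ((\<lambda>q. q x) ` Q)" for x
  proof (rule bdd_belowI2)
    fix q assume "q \<in> Q"
    then show "- p (- x) \<le> q x" using sublinear_minus[OF sq, of q x] qp[of q "-x"] by linarith
  qed
  show low: "(\<lambda>x. INF q\<in>Q. q x) \<le> q" if "q \<in> Q" for q
    unfolding le_fun_def using cINF_lower[OF bdd that] by blast
  obtain q0 where "q0 \<in> Q" using Q(2) by blast
  then have "(\<lambda>x. INF q\<in>Q. q x) \<le> p" using low qp unfolding le_fun_def by (blast intro: order_trans)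
  then show "(\<lambda>x. INF q\<in>Q. q x) \<in> sublinear_minorants p"
    using sublinear_INF_chain[OF Q(2) sq ch bdd] unfolding sublinear_minorants_def by blast
qed

lemma exists_minimal_sublinear_minorant:
  fixes p :: "'a::real_vector \<Rightarrow> real"
  assumes p: "sublinear p"
  obtains q where "q \<in> sublinear_minorants p" "\<And>q'. q' \<in> sublinear_minorants p \<Longrightarrow> q' \<le> q \<Longrightarrow> q' = q"
proof -
  let ?A = "sublinear_minorants p" and ?P = "\<lambda>q q'. q' \<le> q"
  have po: "partial_order_on ?A (relation_of ?P ?A)"
    unfolding partial_order_on_def preorder_on_def refl_on_def trans_def antisym_def relation_of_def
    by auto
  have "\<exists>u\<in>?A. \<forall>q\<in>C. u \<le> q" if C: "C \<in> Chains (relation_of ?P ?A)" for C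
  proof (cases "C = {}")
    case True
    have "p \<in> ?A" using p unfolding sublinear_minorants_def by simp
    then show ?thesis using True by blast
  next
    case False
    have "C \<subseteq> ?A" using C unfolding Chains_def relation_of_def by blast
    moreover have "q1 \<le> q2 \<or> q2 \<le> q1" if "q1 \<in> C" "q2 \<in> C" for q1 q2
      using C that unfolding Chains_def relation_of_def by blast
    ultimately have "(\<lambda>x. INF q\<in>C. q x) \<in> ?A" "\<And>q. q \<in> C \<Longrightarrow> (\<lambda>x. INF q\<in>C. q x) \<le> q"
      using INF_chain_sublinear_minorants[OF p _ False] by blast+
    then show ?thesis by blast
  qed
  then show ?thesis using predicate_Zorn[OF po] that by blast
qed

lemma minimal_sublinear_minorant_linear:
  fixes p :: "'a::real_vector \<Rightarrow> real"
  assumes q: "q \<in> sublinear_minorants p"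
    and min: "\<And>q'. q' \<in> sublinear_minorants p \<Longrightarrow> q' \<le> q \<Longrightarrow> q' = q"
  shows "linear q"
proof -
  have sq: "sublinear q" and qp: "q \<le> p" using q unfolding sublinear_minorants_def by auto
  have shift: "sublinear_shift q z = q" for z
  proof (rule min)
    show "sublinear_shift q z \<le> q" using sublinear_shift_le_self[OF sq] by (simp add: le_fun_def)
    then show "sublinear_shift q z \<in> sublinear_minorants p"
      using sublinear_sublinear_shift[OF sq] qp unfolding sublinear_minorants_def by auto
  qed
  have super: "q a + q b \<le> q (a + b)" for a b
    using sublinear_shift_le[OF sq, of 1 a b] shift[of a] by (simp add: add.commute)
  have add: "q (a + b) = q a + q b" for a b
    using super[of a b] sublinear_add[OF sq, of a b] by simp
  have minus: "q (- a) = - q a" for a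
    using add[of a "-a"] sublinear_zero[OF sq] by simp
  have scale: "q (c *\<^sub>R a) = c * q a" for c a
  proof (cases "c \<ge> 0")
    case False
    then have "q ((- c) *\<^sub>R (- a)) = (- c) * q (- a)" by (intro sublinear_scale[OF sq]) simp
    then show ?thesis using minus by simp
  qed (use sublinear_scale[OF sq] in blast)
  show ?thesis using add scale by (intro linearI) auto
qed

text \<open>A minimal sublinear minorant of the shift of the norm along \<open>w\<close> is a linear functional
  of norm at most one that takes the value \<open>norm w\<close> at \<open>w\<close>.\<close>
theorem exists_norming_functional:
  fixes w :: "'a::real_normed_vector"
  obtains L :: "'a \<Rightarrow>\<^sub>L real" where "\<And>x. \<bar>L x\<bar> \<le> norm x" "L w = norm w"
proof -
  let ?p = "sublinear_shift norm w"
  obtain q where qF: "q \<in> sublinear_minorants ?p"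
    and min: "\<And>q'. q' \<in> sublinear_minorants ?p \<Longrightarrow> q' \<le> q \<Longrightarrow> q' = q"
    using exists_minimal_sublinear_minorant[OF sublinear_sublinear_shift[OF sublinear_norm]] by blast
  have lin: "linear q" by (rule minimal_sublinear_minorant_linear[OF qF min])
  have le: "q x \<le> norm x" for x
    using qF sublinear_shift_le_self[OF sublinear_norm] unfolding sublinear_minorants_def le_fun_def
    by (blast intro: order_trans)
  have bnd: "\<bar>q x\<bar> \<le> norm x" for x
    using le[of x] le[of "-x"] linear_neg[OF lin, of x] by (simp add: abs_le_iff)
  have "q (- w) \<le> - norm w"
    using qF sublinear_shift_minus_le[OF sublinear_norm, of w] unfolding sublinear_minorants_def le_fun_def
    by (blast intro: order_trans)
  then have qw: "q w = norm w" using bnd[of w] linear_neg[OF lin, of w] by simp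
  have "bounded_linear q"
    using lin bnd by (intro bounded_linear_intro[where K = 1]) (auto simp: linear_add linear_scale)
  then show ?thesis using that[of "Blinfun q"] bnd qw by (simp add: bounded_linear_Blinfun_apply)
qed

section \<open>A bi-Lipschitz copy of a ball of \<open>E\<close> in an order interval\<close>

lemma exists_unit_vector_half_norming:
  fixes x0 :: "'a::real_normed_vector \<Rightarrow>\<^sub>L real"
  assumes "x0 \<noteq> 0"
  obtains z where "norm z = 1" "x0 z > norm x0 / 2"
proof -
  have "\<exists>z. norm z = 1 \<and> x0 z > norm x0 / 2"
  proof (rule ccontr)
    assume "\<nexists>z. norm z = 1 \<and> x0 z > norm x0 / 2"
    then have le: "x0 z \<le> norm x0 / 2" if "norm z = 1" for z using that by (meson not_le)
    have "\<bar>x0 v\<bar> \<le> norm x0 / 2 * norm v" for v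
    proof (cases "v = 0")
      case False
      then have nv: "norm v > 0" by simp
      let ?u = "(1 / norm v) *\<^sub>R v"
      have "x0 ?u \<le> norm x0 / 2" "x0 (- ?u) \<le> norm x0 / 2" using le nv by simp_all
      then have "\<bar>x0 v\<bar> / norm v \<le> norm x0 / 2"
        using nv by (simp add: blinfun.scaleR_right blinfun.minus_right abs_le_iff)
      then show ?thesis using nv by (simp add: divide_le_eq mult.commute)
    qed simp
    then have "norm x0 \<le> norm x0 / 2" by (intro norm_blinfun_bound) auto
    then show False using assms by simp
  qed
  then show ?thesis using that by blast
qed

text \<open>Testing \<open>F - G\<close> at the two functionals \<open>x\<^sub>0 \<plusminus> s L\<close>, with \<open>L\<close> norming \<open>w\<close>.\<close>
lemma fbl_dist_ge_of_local_delta: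
  fixes F G :: "('a::real_normed_vector \<Rightarrow>\<^sub>L real) \<Rightarrow> real"
  assumes H: "F \<in> H0" "G \<in> H0" and s: "s > 0"
    and local: "\<And>xs. norm (xs - x0) \<le> s \<Longrightarrow> F xs - G xs = xs w"
  shows "s / (norm x0 + s) * norm w \<le> fbl_dist F G"
proof -
  obtain L :: "'a \<Rightarrow>\<^sub>L real" where L: "\<And>v. \<bar>L v\<bar> \<le> norm v" "L w = norm w"
    using exists_norming_functional[of w] by blast
  have nL: "norm (s *\<^sub>R L) \<le> s" using norm_blinfun_bound[of 1 L] L(1) s by simp
  define D where "D = fbl_dist F G"
  have D: "D \<ge> 0" unfolding D_def using fbl_dist_nonneg[OF H] .
  have bound: "\<bar>F xs - G xs\<bar> \<le> D * (norm x0 + s)" if "norm (xs - x0) \<le> s" for xs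
  proof -
    have "norm xs \<le> norm x0 + s" using that norm_triangle_ineq2[of xs x0] by linarith
    then show ?thesis
      using abs_diff_le_fbl_dist[OF H, of xs] D unfolding D_def by (meson mult_left_mono order_trans)
  qed
  have "F (x0 + s *\<^sub>R L) - G (x0 + s *\<^sub>R L) = x0 w + s * norm w"
    using local[of "x0 + s *\<^sub>R L"] nL L(2) by (simp add: blinfun.add_left blinfun.scaleR_left)
  moreover have "F (x0 - s *\<^sub>R L) - G (x0 - s *\<^sub>R L) = x0 w - s * norm w"
    using local[of "x0 - s *\<^sub>R L"] nL L(2) by (simp add: blinfun.diff_left blinfun.scaleR_left)
  ultimately have "s * norm w \<le> D * (norm x0 + s)"
    using bound[of "x0 + s *\<^sub>R L"] bound[of "x0 - s *\<^sub>R L"] nL by (auto simp: abs_le_iff)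
  moreover have "norm x0 + s > 0" using s by (simp add: add_nonneg_pos)
  ultimately show ?thesis unfolding D_def by (simp add: pos_divide_le_eq algebra_simps)
qed

lemma truncation_inactive_near:
  fixes x0 xs :: "'a::real_normed_vector \<Rightarrow>\<^sub>L real"
  assumes z: "norm z \<le> 1" "x0 z \<ge> norm x0 / 2" and xs: "norm (xs - x0) \<le> s"
    and s: "0 \<le> s" "s \<le> norm x0 / 4" and lam: "lam \<ge> 0"
    and x: "norm x \<le> lam * norm x0 / (4 * (norm x0 + s))"
    and u: "2 * lam * (norm x0 + s) \<le> u"
  shows "min u (max (xs (lam *\<^sub>R z + x)) 0) = xs (lam *\<^sub>R z + x)"
proof -
  have nxs: "norm xs \<le> norm x0 + s" using xs norm_triangle_ineq2[of xs x0] by linarith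
  have "\<bar>xs x\<bar> \<le> (norm x0 + s) * norm x"
    using norm_blinfun[of xs x] mult_right_mono[OF nxs norm_ge_zero[of x]] by simp
  also have "\<dots> \<le> lam * norm x0 / 4"
    using x s mult_nonneg_nonneg[OF lam norm_ge_zero[of x0]]
    by (cases "norm x0 + s = 0") (auto simp: field_simps)
  finally have small: "\<bar>xs x\<bar> \<le> lam * norm x0 / 4" .
  have "\<bar>(xs - x0) z\<bar> \<le> s"
    using norm_blinfun[of "xs - x0" z] mult_mono[OF xs z(1) s(1) norm_ge_zero] by simp
  then have "xs z \<ge> norm x0 / 4" using z(2) s(2) by (simp add: blinfun.diff_left abs_le_iff)
  then have "lam * xs z \<ge> lam * (norm x0 / 4)" using lam by (rule mult_left_mono)
  then have "0 \<le> xs (lam *\<^sub>R z + x)"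
    using small by (simp add: blinfun.add_right blinfun.scaleR_right abs_le_iff)
  have "\<bar>xs z\<bar> \<le> norm x0 + s"
    using norm_blinfun[of xs z] mult_mono[OF nxs z(1) _ norm_ge_zero] s(1) by simp
  then have "lam * xs z \<le> lam * (norm x0 + s)" using lam by (simp add: mult_left_mono abs_le_iff)
  moreover have "lam * (norm x0 / 4) \<le> lam * (norm x0 + s)" using lam s by (intro mult_left_mono) auto
  ultimately have "xs (lam *\<^sub>R z + x) \<le> 2 * lam * (norm x0 + s)"
    using small by (simp add: blinfun.add_right blinfun.scaleR_right abs_le_iff)
  then show ?thesis using \<open>0 \<le> xs (lam *\<^sub>R z + x)\<close> u by simp
qed

lemma truncation_in_order_interval:
  fixes f g h :: "('a::real_normed_vector \<Rightarrow>\<^sub>L real) \<Rightarrow> real"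
  assumes "f \<in> FBL" "g \<in> FBL" "f \<le> g" "h \<in> FBL"
  shows "(\<lambda>y. f y + min (g y - f y) (max (h y) 0)) \<in> order_interval f g"
proof -
  have "(\<lambda>_::'a \<Rightarrow>\<^sub>L real. 0::real) \<in> FBL" using FBL_closed(3)[OF assms(4,4), of 0] by simp
  then have "(\<lambda>y. max (h y) 0) \<in> FBL" using FBL_closed(4)[OF assms(4)] by blast
  then have "(\<lambda>y. min (g y - f y) (max (h y) 0)) \<in> FBL"
    using FBL_closed(5)[OF FBL_diff[OF assms(2,1)]] by blast
  then have "(\<lambda>y. f y + min (g y - f y) (max (h y) 0)) \<in> FBL"
    using FBL_closed(2)[OF assms(1)] by blast
  moreover have "f y \<le> g y" for y using assms(3) by (simp add: le_fun_def)
  ultimately show ?thesis unfolding order_interval_def le_fun_def by auto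
qed

lemma exists_truncation_window:
  fixes u :: "('a::real_normed_vector \<Rightarrow>\<^sub>L real) \<Rightarrow> real"
  assumes u: "continuous_on UNIV u" and a: "u x0 > 0" and "x0 \<noteq> 0"
  shows "\<exists>s \<rho> lam (z::'a). s > 0 \<and> \<rho> > 0 \<and> (\<forall>x xs. norm x < \<rho> \<longrightarrow> norm (xs - x0) \<le> s \<longrightarrow>
      min (u xs) (max (xs (lam *\<^sub>R z + x)) 0) = xs (lam *\<^sub>R z + x))"
proof -
  define N where "N = norm x0"
  have N: "N > 0" unfolding N_def using \<open>x0 \<noteq> 0\<close> by simp
  have "\<forall>e>0. \<exists>d>0. \<forall>y\<in>UNIV. dist y x0 < d \<longrightarrow> dist (u y) (u x0) < e"
    using u unfolding continuous_on_iff by blast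
  moreover have "u x0 / 2 > 0" using a by simp
  ultimately obtain r where r: "r > 0" "\<And>y. dist y x0 < r \<Longrightarrow> \<bar>u y - u x0\<bar> < u x0 / 2"
    unfolding dist_real_def by blast
  obtain z where "norm z = 1" "N / 2 < x0 z"
    using exists_unit_vector_half_norming[OF \<open>x0 \<noteq> 0\<close>] unfolding N_def by blast
  then have z: "norm z \<le> 1" "N / 2 \<le> x0 z" by simp_all
  define s where "s = min (r / 2) (N / 4)"
  have s: "0 < s" "s < r" "s \<le> N / 4" unfolding s_def using r(1) N by auto
  define lam where "lam = u x0 / (4 * (N + s))"
  define \<rho> where "\<rho> = lam * N / (4 * (N + s))"
  have lam: "lam > 0" and \<rho>: "\<rho> > 0" unfolding lam_def \<rho>_def using a N s by simp_all
  have inactive: "min (u xs) (max (xs (lam *\<^sub>R z + x)) 0) = xs (lam *\<^sub>R z + x)"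
    if x: "norm x < \<rho>" and xs: "norm (xs - x0) \<le> s" for x xs
  proof (rule truncation_inactive_near[OF z[unfolded N_def] xs less_imp_le[OF s(1)] s(3)[unfolded N_def]
        less_imp_le[OF lam]])
    show "norm x \<le> lam * norm x0 / (4 * (norm x0 + s))" using x unfolding \<rho>_def N_def by simp
    have "dist xs x0 < r" using xs s(2) by (simp add: dist_norm)
    then have "\<bar>u xs - u x0\<bar> < u x0 / 2" by (rule r(2))
    moreover have "2 * lam * (norm x0 + s) = u x0 / 2"
      unfolding lam_def N_def[symmetric] using N s by (simp add: field_simps)
    ultimately show "2 * lam * (norm x0 + s) \<le> u xs" unfolding abs_less_iff by linarith
  qed
  then show ?thesis using s(1) \<rho> by blast
qed

lemma order_interval_contains_bilipschitz_ball:
  fixes f g :: "('a::real_normed_vector \<Rightarrow>\<^sub>L real) \<Rightarrow> real"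
  assumes f: "f \<in> FBL" and g: "g \<in> FBL" and "f \<le> g" "f \<noteq> g"
  obtains c \<rho> \<phi> where "c > 0" "\<rho> > 0" "\<phi> ` ball (0::'a) \<rho> \<subseteq> order_interval f g"
    "\<And>x y. x \<in> ball 0 \<rho> \<Longrightarrow> y \<in> ball 0 \<rho> \<Longrightarrow> c * dist x y \<le> fbl_dist (\<phi> x) (\<phi> y)"
proof -
  define u where "u = (\<lambda>y. g y - f y)"
  have uF: "u \<in> FBL" unfolding u_def by (rule FBL_diff[OF g f])
  obtain x0 where "f x0 \<noteq> g x0" using \<open>f \<noteq> g\<close> by blast
  then have a: "u x0 > 0" using \<open>f \<le> g\<close> unfolding u_def le_fun_def by (metis diff_gt_0_iff_gt order_less_le)
  have "u \<in> H0" using uF FBL_subset_H0 by blast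
  then have "pos_homogeneous u" unfolding H0_iff by blast
  then have "u 0 = 0" by (rule pos_homogeneous_zero)
  then have "x0 \<noteq> 0" using a by auto
  obtain s \<rho> lam z where s: "s > 0" and \<rho>: "\<rho> > 0" and window:
    "\<forall>x xs. norm x < \<rho> \<longrightarrow> norm (xs - x0) \<le> s \<longrightarrow>
      min (u xs) (max (xs (lam *\<^sub>R z + x)) 0) = xs (lam *\<^sub>R z + x)"
    using exists_truncation_window[OF FBL_continuous[OF uF] a \<open>x0 \<noteq> 0\<close>] by blast
  define \<phi> where "\<phi> x = (\<lambda>y. f y + min (u y) (max (delta (lam *\<^sub>R z + x) y) 0))" for x
  have \<phi>I: "\<phi> x \<in> order_interval f g" for x
    using truncation_in_order_interval[OF f g \<open>f \<le> g\<close> FBL_closed(1)[OF f f]]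
    unfolding \<phi>_def u_def by blast
  have "s / (norm x0 + s) * dist x y \<le> fbl_dist (\<phi> x) (\<phi> y)" if "x \<in> ball 0 \<rho>" "y \<in> ball 0 \<rho>" for x y
  proof -
    have "\<phi> x xs - \<phi> y xs = xs (x - y)" if "norm (xs - x0) \<le> s" for xs
      using window[rule_format, of x xs] window[rule_format, of y xs] \<open>x \<in> ball 0 \<rho>\<close> \<open>y \<in> ball 0 \<rho>\<close> that
      unfolding \<phi>_def delta_def by (simp add: blinfun.add_right blinfun.diff_right)
    moreover have "\<phi> x \<in> H0" "\<phi> y \<in> H0" using \<phi>I FBL_subset_H0 unfolding order_interval_def by blast+
    ultimately show ?thesis
      using fbl_dist_ge_of_local_delta[of "\<phi> x" "\<phi> y" s x0 "x - y"] s unfolding dist_norm by blast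
  qed
  moreover have "s / (norm x0 + s) > 0" using s by (simp add: add_nonneg_pos)
  ultimately show ?thesis using that[of "s / (norm x0 + s)" \<rho> \<phi>] \<rho> \<phi>I by blast
qed

section \<open>The density character of an order interval\<close>

lemma dense_wrt_scaled_ball:
  fixes T :: "'a::real_normed_vector set"
  assumes \<rho>: "\<rho> > 0" and T: "dense_wrt dist (ball 0 \<rho>) T"
  shows "dense_wrt dist UNIV ((\<lambda>(k, t). real k *\<^sub>R t) ` (UNIV \<times> T))"
  unfolding dense_wrt_def
proof (intro conjI ballI allI impI subset_UNIV)
  fix x :: 'a and e :: real assume e: "e > 0"
  obtain n :: nat where n: "norm x / \<rho> < real n" using reals_Archimedean2 by blast
  then have "norm x < real n * \<rho>" using \<rho> by (simp add: divide_less_eq)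
  then have k: "real (Suc n) > 0" "norm x < real (Suc n) * \<rho>" using \<rho> by (simp_all add: algebra_simps)
  then have "(1 / real (Suc n)) *\<^sub>R x \<in> ball 0 \<rho>" by (simp add: divide_less_eq mult.commute)
  moreover have "e / real (Suc n) > 0" using e by simp
  ultimately obtain t where t: "t \<in> T" "dist ((1 / real (Suc n)) *\<^sub>R x) t < e / real (Suc n)"
    using T unfolding dense_wrt_def by blast
  have "x - real (Suc n) *\<^sub>R t = real (Suc n) *\<^sub>R ((1 / real (Suc n)) *\<^sub>R x - t)"
    by (simp add: algebra_simps)
  then have "dist x (real (Suc n) *\<^sub>R t) = real (Suc n) * dist ((1 / real (Suc n)) *\<^sub>R x) t"
    unfolding dist_norm by simp
  also have "\<dots> < e" using t(2) k(1) by (simp add: field_simps)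
  finally have "dist x (real (Suc n) *\<^sub>R t) < e" .
  moreover have "real (Suc n) *\<^sub>R t \<in> (\<lambda>(k, t). real k *\<^sub>R t) ` (UNIV \<times> T)"
    by (rule image_eqI[of _ _ "(Suc n, t)"]) (use t(1) in auto)
  ultimately show "\<exists>y\<in>(\<lambda>(k, t). real k *\<^sub>R t) ` (UNIV \<times> T). dist x y < e" by blast
qed

lemma exists_dense_card_le_of_bilipschitz_ball:
  fixes \<phi> :: "'a::real_normed_vector \<Rightarrow> 'b"
  assumes c: "c > 0" and \<rho>: "\<rho> > 0" and into: "\<phi> ` ball 0 \<rho> \<subseteq> A"
    and bilip: "\<And>x y. x \<in> ball 0 \<rho> \<Longrightarrow> y \<in> ball 0 \<rho> \<Longrightarrow> c * dist x y \<le> d (\<phi> x) (\<phi> y)"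
    and tri: "\<And>x y z. x \<in> A \<Longrightarrow> y \<in> A \<Longrightarrow> z \<in> A \<Longrightarrow> d x y \<le> d x z + d y z"
    and DA: "dense_wrt d A DA" "infinite DA"
  shows "\<exists>T::'a set. dense_wrt dist UNIV T \<and> |T| \<le>o |DA|"
proof -
  have approx: "\<exists>q\<in>DA. d (\<phi> x) q / c < e" if "x \<in> ball 0 \<rho>" "e > 0" for x e
  proof -
    have "\<phi> x \<in> A" "c * e > 0" using into that c by auto
    then obtain q where "q \<in> DA" "d (\<phi> x) q < c * e" using DA(1) unfolding dense_wrt_def by blast
    then show ?thesis using c by (auto simp: divide_less_eq mult.commute)
  qed
  have tri': "dist x y \<le> d (\<phi> x) q / c + d (\<phi> y) q / c" if "x \<in> ball 0 \<rho>" "y \<in> ball 0 \<rho>" "q \<in> DA" for x y q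
  proof -
    have "c * dist x y \<le> d (\<phi> x) q + d (\<phi> y) q"
      using bilip[OF that(1,2)] tri[of "\<phi> x" "\<phi> y" q] that into DA(1) unfolding dense_wrt_def by force
    then show ?thesis using c by (simp add: field_simps)
  qed
  have "\<exists>T. dense_wrt dist (ball (0::'a) \<rho>) T \<and> |T| \<le>o |DA \<times> (UNIV::nat set)|"
    using exists_dense_card_le_Times_nat[of "ball 0 \<rho>" DA "\<lambda>x q. d (\<phi> x) q / c" dist] approx tri' by blast
  then obtain T where T: "dense_wrt dist (ball (0::'a) \<rho>) T" "|T| \<le>o |DA \<times> (UNIV::nat set)|" by blast
  have nat: "|UNIV::nat set| \<le>o |DA|" by (rule card_of_countable_le_infinite[OF countableI_type DA(2)])
  have "|(\<lambda>(k, t). real k *\<^sub>R t) ` (UNIV \<times> T)| \<le>o |(UNIV::nat set) \<times> T|" by (rule card_of_image)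
  also have "|(UNIV::nat set) \<times> T| \<le>o |DA|"
    using card_of_Times_le_infinite[OF DA(2) nat ordLeq_transitive[OF T(2)
        card_of_Times_le_infinite[OF DA(2) card_of_mono1[OF subset_refl] nat]]] .
  finally show ?thesis using dense_wrt_scaled_ball[OF \<rho> T(1)] by blast
qed

lemma exists_nonzero_of_H0_ne:
  fixes f g :: "('a::real_normed_vector \<Rightarrow>\<^sub>L real) \<Rightarrow> real"
  assumes "f \<in> H0" "g \<in> H0" "f \<noteq> g"
  obtains x :: 'a where "x \<noteq> 0"
proof -
  obtain L where "f L \<noteq> g L" using assms(3) by blast
  moreover have "f 0 = 0" "g 0 = 0" using assms(1,2) pos_homogeneous_zero unfolding H0_iff by blast+
  ultimately have "L \<noteq> 0" by auto
  then obtain x where "L x \<noteq> 0" using blinfun_eqI[of L 0] by force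
  then show ?thesis using that[of x] by force
qed

lemma infinite_ball:
  fixes v :: "'a::real_normed_vector"
  assumes "v \<noteq> 0" "\<rho> > 0"
  shows "infinite (ball (0::'a) \<rho>)"
proof
  assume fin: "finite (ball (0::'a) \<rho>)"
  have "(\<lambda>t. t *\<^sub>R v) ` {0<..<\<rho> / norm v} \<subseteq> ball 0 \<rho>"
    using assms by (auto simp: field_simps)
  then have "finite ((\<lambda>t. t *\<^sub>R v) ` {0<..<\<rho> / norm v})" using fin by (rule finite_subset)
  moreover have "inj_on (\<lambda>t. t *\<^sub>R v) {0<..<\<rho> / norm v}" using assms(1) by (auto simp: inj_on_def)
  ultimately have "finite {0<..<\<rho> / norm v}" by (rule finite_imageD)
  moreover have "\<rho> / norm v > 0" using assms by simp
  ultimately show False using infinite_Ioo by blast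
qed

lemma infinite_image_bilipschitz:
  assumes "c > 0" "infinite S" "\<And>z. d z z = 0"
    and bilip: "\<And>x y. x \<in> S \<Longrightarrow> y \<in> S \<Longrightarrow> c * dist x y \<le> d (\<phi> x) (\<phi> y)"
  shows "infinite (\<phi> ` S)"
proof -
  have "inj_on \<phi> S"
  proof (rule inj_onI)
    fix x y assume "x \<in> S" "y \<in> S" "\<phi> x = \<phi> y"
    then have "c * dist x y \<le> 0" using bilip[of x y] assms(3) by simp
    then show "x = y" using assms(1) by (simp add: mult_le_0_iff)
  qed
  then show ?thesis using assms(2) finite_imageD by blast
qed

lemma order_interval_subset_FBL: "order_interval f g \<subseteq> FBL"
  unfolding order_interval_def by blast

theorem theorem3p2:
  fixes f g :: "('a::banach \<Rightarrow>\<^sub>L real) \<Rightarrow> real"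
  assumes "f \<in> FBL" and "g \<in> FBL" and "f \<le> g" and "f \<noteq> g"
  shows "same_density fbl_dist (order_interval f g) dist (UNIV :: 'a set)"
proof -
  obtain c \<rho> \<phi> where c: "c > 0" and \<rho>: "\<rho> > 0" and into: "\<phi> ` ball (0::'a) \<rho> \<subseteq> order_interval f g"
    and bilip: "\<And>x y. x \<in> ball 0 \<rho> \<Longrightarrow> y \<in> ball 0 \<rho> \<Longrightarrow> c * dist x y \<le> fbl_dist (\<phi> x) (\<phi> y)"
    using order_interval_contains_bilipschitz_ball[OF assms] by blast
  obtain v :: 'a where "v \<noteq> 0" using exists_nonzero_of_H0_ne[of f g] assms(1,2,4) FBL_subset_H0 by blast
  then have ball: "infinite (ball (0::'a) \<rho>)" using \<rho> by (rule infinite_ball)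
  have "infinite (\<phi> ` ball 0 \<rho>)"
    using infinite_image_bilipschitz[of c "ball 0 \<rho>" fbl_dist \<phi>] c ball fbl_dist_self bilip by blast
  then have I: "infinite (order_interval f g)" by (rule infinite_super[OF into])
  have H: "order_interval f g \<subseteq> H0" using order_interval_subset_FBL FBL_subset_H0 by (rule order_trans)
  show ?thesis
  proof (rule same_densityI)
    fix DE assume "density_witness dist (UNIV :: 'a set) DE"
    then have DE: "dense_wrt dist UNIV DE" by (rule density_witness_dense)
    then have "infinite DE" using dense_wrt_infinite[OF DE infinite_super[OF subset_UNIV ball]] by simp
    with DE show "\<exists>D. dense_wrt fbl_dist (order_interval f g) D \<and> |D| \<le>o |DE|"
      using exists_dense_card_le_FBL order_interval_subset_FBL by blast
  next
    fix DI assume "density_witness fbl_dist (order_interval f g) DI"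
    then have "dense_wrt fbl_dist (order_interval f g) DI" "infinite DI"
      using density_witness_dense dense_wrt_infinite[OF _ I] fbl_dist_pos H by blast+
    then show "\<exists>T::'a set. dense_wrt dist UNIV T \<and> |T| \<le>o |DI|"
      by (intro exists_dense_card_le_of_bilipschitz_ball[OF c \<rho> into])
        (simp_all add: bilip fbl_dist_triangle2 subsetD[OF H])
  qed (simp_all add: fbl_dist_self)
qed

end
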